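(* Let $Q$ be a QNP and let $\pi$ be a policy for $Q$. A sequence $\bar\tau=\bar s_0,\bar s_1,\dots$ is an infinite non-terminating $\pi$-trajectory of the FOND problem $P=T_D(Q)$ if and only if there is an infinite $\pi$-trajectory $\tau=s_0,s_1,\dots$ of $Q$ (an $\epsilon$-trajectory for some $\epsilon>0$) such that $\bar s_i$ is the boolean state of $s_i$ for every $i$.
   Context: A qualitative numerical problem (QNP) is a tuple $Q=\langle F,V,I,O,G\rangle$ where $F$ is a finite set of propositional variables and $V$ a finite set of numerical variables taking non-negative real values. $F$-literals are $p,\neg p$; $V$-literals are $X=0$ and $X>0$. $I$ and $G$ are consistent sets of literals. Each action $a\in O$ has a precondition $Pre(a)$ (set of $F$- and $V$-literals), propositional effects $\mathit{Eff}(a)$ (set of $F$-literals) and numerical effects $N(a)$ (atoms $Inc(X)$, $Dec(X)$, at most one per variable); if $Dec(X)\in N(a)$ then $X>0\in Pre(a)$. A state $s$ assigns truth values to $F$ and reals $s[X]\ge 0$ to $V$. Initial states satisfy $I$ under a closed-world assumption. $a$ is applicable in $s$ if $s$ satisfies $Pre(a)$. For applicable $a$, $s'\in F(a,s)$ iff the propositional effects are applied (others unchanged), $s'[X]>s[X]$ if $Inc(X)\in N(a)$, $s'[X]<s[X]$ if $Dec(X)\in N(a)$, $s'[X]=s[X]$ otherwise. A trajectory is a sequence $s_0,a_0,s_1,\dots$ with $s_0$ initial, $a_i$ applicable in $s_i$, $s_{i+1}\in F(a_i,s_i)$; for $\epsilon>0$ it is an $\epsilon$-trajectory if for all $X,i$: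 $s_{i+1}[X]\neq s_i[X]$ implies $|s_{i+1}[X]-s_i[X]|\ge\epsilon$ or $0=s_{i+1}[X]<s_i[X]<\epsilon$. The boolean state $\bar s$ of $s$ is its truth valuation on the atoms $p\in F$ and $X=0$. A policy is a partial map $\pi$ from states to actions with $\pi(s)=\pi(s')$ whenever $\bar s=\bar s'$; a $\pi$-trajectory has $a_i=\pi(s_i)$. The direct translation $T_D(Q)$ is the FOND problem over $F\cup\{p_{X=0}:X\in V\}$ obtained by reading $X=0$ as $p_{X=0}$ and $X>0$ as $\neg p_{X=0}$ in $I$, $G$, preconditions, keeping propositional effects, replacing $Inc(X)$ by the deterministic effect $\neg p_{X=0}$ and $Dec(X)$ by the nondeterministic effect $\neg p_{X=0}\mid p_{X=0}$. Its states are the boolean states of $Q$, its unique initial state is the common boolean state of the initial states of $Q$, and $\pi$ acts on it via $\bar s\mapsto \pi(s)$. A $\pi$-trajectory of $T_D(Q)$ is a sequence $\bar s_0,\bar s_1,\dots$ from the initial state with $\pi(\bar s_i)$ applicable and $\bar s_{i+1}$ a possible successor. An action of $T_D(Q)$ is a $Dec(X)$ (resp. $Inc(X)$) action if the corresponding action of $Q$ has $Dec(X)$ (resp. $Inc(X)$) in $N(a)$. For an infinite $\pi$-trajectory of $T_D(Q)$, the recurrent states are those occurring infinitely often; the trajectory is terminating if there is $X\in V$ such that $\pi(\bar s)$ is a $Dec(X)$ action for some recurrent $\bar s$ and $\pi(\bar s')$ is not an $Inc(X)$ action for any recurrent $\bar s'$; otherwise it is non-terminating. *)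

theory Defs
  imports Main "HOL.Real"
begin

datatype ('f, 'v) lit = PosL 'f | NegL 'f | ZeroL 'v | GtZeroL 'v

datatype neffect = Inc | Dec

(* Action: precondition (F- and V-literals), propositional effects (F-literals,
   (p,True) for p, (p,False) for \<not>p), numerical effects (at most one per
   variable, hence a partial function). *)
datatype ('f, 'v) action =
  Action (pre: "('f, 'v) lit set") (eff: "('f \<times> bool) set") (neff: "'v \<Rightarrow> neffect option")

(* QNP <F, V, I, O, G> with F = UNIV::'f set, V = UNIV::'v set *)
datatype ('f, 'v) qnp =
  QNP (init: "('f, 'v) lit set") (ops: "('f, 'v) action set") (goal: "('f, 'v) lit set")

definition consistent_lits :: "('f, 'v) lit set \<Rightarrow> bool" where
  "consistent_lits L \<longleftrightarrow> (\<forall>p. \<not> (PosL p \<in> L \<and> NegL p \<in> L)) \<and> (\<forall>X. \<not> (ZeroL X \<in> L \<and> GtZeroL X \<in> L))"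

definition wf_qnp :: "('f::finite, 'v::finite) qnp \<Rightarrow> bool" where
  "wf_qnp Q \<longleftrightarrow> consistent_lits (init Q) \<and> consistent_lits (goal Q) \<and> finite (ops Q) \<and>
     (\<forall>a\<in>ops Q. \<forall>X. neff a X = Some Dec \<longrightarrow> GtZeroL X \<in> pre a)"

type_synonym ('f, 'v) state = "('f \<Rightarrow> bool) \<times> ('v \<Rightarrow> real)"

definition valid_state :: "('f, 'v) state \<Rightarrow> bool" where
  "valid_state s \<longleftrightarrow> (\<forall>X. snd s X \<ge> 0)"

(* boolean states: truth values of the atoms p and X = 0 *)
type_synonym ('f, 'v) bstate = "('f \<Rightarrow> bool) \<times> ('v \<Rightarrow> bool)"

definition bool_state :: "('f, 'v) state \<Rightarrow> ('f, 'v) bstate" where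
  "bool_state s = (fst s, \<lambda>X. snd s X = 0)"

fun holds_lit :: "('f, 'v) bstate \<Rightarrow> ('f, 'v) lit \<Rightarrow> bool" where
  "holds_lit b (PosL p) = fst b p"
| "holds_lit b (NegL p) = (\<not> fst b p)"
| "holds_lit b (ZeroL X) = snd b X"
| "holds_lit b (GtZeroL X) = (\<not> snd b X)"

definition holds_lits :: "('f, 'v) bstate \<Rightarrow> ('f, 'v) lit set \<Rightarrow> bool" where
  "holds_lits b L \<longleftrightarrow> (\<forall>l\<in>L. holds_lit b l)"

(* common boolean state of the initial states: I under the closed-world assumption
   (an atom p, resp. X = 0, is true iff the literal p, resp. X = 0, is in I) *)
definition init_bstate :: "('f, 'v) qnp \<Rightarrow> ('f, 'v) bstate" where
  "init_bstate Q = (\<lambda>p. PosL p \<in> init Q, \<lambda>X. ZeroL X \<in> init Q)"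

definition initial_state :: "('f, 'v) qnp \<Rightarrow> ('f, 'v) state \<Rightarrow> bool" where
  "initial_state Q s \<longleftrightarrow> valid_state s \<and> bool_state s = init_bstate Q"

definition apply_eff :: "('f \<times> bool) set \<Rightarrow> ('f \<Rightarrow> bool) \<Rightarrow> ('f \<Rightarrow> bool)" where
  "apply_eff E v = (\<lambda>p. if (p, True) \<in> E then True else if (p, False) \<in> E then False else v p)"

definition applicable :: "('f, 'v) action \<Rightarrow> ('f, 'v) state \<Rightarrow> bool" where
  "applicable a s \<longleftrightarrow> holds_lits (bool_state s) (pre a)"

definition succ_Q :: "('f, 'v) action \<Rightarrow> ('f, 'v) state \<Rightarrow> ('f, 'v) state \<Rightarrow> bool" where
  "succ_Q a s s' \<longleftrightarrow> valid_state s' \<and> fst s' = apply_eff (eff a) (fst s) \<and>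
     (\<forall>X. (neff a X = Some Inc \<longrightarrow> snd s' X > snd s X) \<and>
          (neff a X = Some Dec \<longrightarrow> snd s' X < snd s X) \<and>
          (neff a X = None \<longrightarrow> snd s' X = snd s X))"

definition is_policy :: "('f, 'v) qnp \<Rightarrow> (('f, 'v) state \<Rightarrow> ('f, 'v) action option) \<Rightarrow> bool" where
  "is_policy Q \<pi> \<longleftrightarrow> (\<forall>s a. valid_state s \<longrightarrow> \<pi> s = Some a \<longrightarrow> a \<in> ops Q) \<and>
     (\<forall>s s'. valid_state s \<longrightarrow> valid_state s' \<longrightarrow> bool_state s = bool_state s' \<longrightarrow> \<pi> s = \<pi> s')"

definition traj_Q :: "('f, 'v) qnp \<Rightarrow> (('f, 'v) state \<Rightarrow> ('f, 'v) action option) \<Rightarrow> (nat \<Rightarrow> ('f, 'v) state) \<Rightarrow> bool" where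
  "traj_Q Q \<pi> s \<longleftrightarrow> initial_state Q (s 0) \<and>
     (\<forall>i. \<exists>a. \<pi> (s i) = Some a \<and> applicable a (s i) \<and> succ_Q a (s i) (s (Suc i)))"

definition eps_traj :: "real \<Rightarrow> (nat \<Rightarrow> ('f, 'v) state) \<Rightarrow> bool" where
  "eps_traj \<epsilon> s \<longleftrightarrow> (\<forall>X i. snd (s (Suc i)) X \<noteq> snd (s i) X \<longrightarrow>
      \<bar>snd (s (Suc i)) X - snd (s i) X\<bar> \<ge> \<epsilon> \<or>
      (0 = snd (s (Suc i)) X \<and> snd (s (Suc i)) X < snd (s i) X \<and> snd (s i) X < \<epsilon>))"

definition bpolicy :: "(('f, 'v) state \<Rightarrow> ('f, 'v) action option) \<Rightarrow> ('f, 'v) bstate \<Rightarrow> ('f, 'v) action option" where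
  "bpolicy \<pi> b = \<pi> (SOME s. valid_state s \<and> bool_state s = b)"

definition succ_D :: "('f, 'v) action \<Rightarrow> ('f, 'v) bstate \<Rightarrow> ('f, 'v) bstate \<Rightarrow> bool" where
  "succ_D a b b' \<longleftrightarrow> fst b' = apply_eff (eff a) (fst b) \<and>
     (\<forall>X. (neff a X = Some Inc \<longrightarrow> \<not> snd b' X) \<and>
          (neff a X = None \<longrightarrow> snd b' X = snd b X))"

definition traj_D :: "('f, 'v) qnp \<Rightarrow> (('f, 'v) state \<Rightarrow> ('f, 'v) action option) \<Rightarrow> (nat \<Rightarrow> ('f, 'v) bstate) \<Rightarrow> bool" where
  "traj_D Q \<pi> bs \<longleftrightarrow> bs 0 = init_bstate Q \<and>
     (\<forall>i. \<exists>a. bpolicy \<pi> (bs i) = Some a \<and> holds_lits (bs i) (pre a) \<and> succ_D a (bs i) (bs (Suc i)))"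

definition recurrent :: "(nat \<Rightarrow> ('f, 'v) bstate) \<Rightarrow> ('f, 'v) bstate \<Rightarrow> bool" where
  "recurrent bs b \<longleftrightarrow> infinite {i. bs i = b}"

definition terminating_D :: "(('f, 'v) state \<Rightarrow> ('f, 'v) action option) \<Rightarrow> (nat \<Rightarrow> ('f, 'v) bstate) \<Rightarrow> bool" where
  "terminating_D \<pi> bs \<longleftrightarrow> (\<exists>X.
     (\<exists>b. recurrent bs b \<and> (\<exists>a. bpolicy \<pi> b = Some a \<and> neff a X = Some Dec)) \<and>
     (\<forall>b'. recurrent bs b' \<longrightarrow> \<not> (\<exists>a. bpolicy \<pi> b' = Some a \<and> neff a X = Some Inc)))"

end

theory Submission
  imports Defs Complex_Main
begin

(* Projecting a run of Q onto boolean states gives a run of T_D(Q), and it is non-terminating: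
   otherwise some X is decremented infinitely often but, from some point on, never incremented.
   Then X is eventually non-increasing and bounded below, hence convergent, so its drops
   eventually become smaller than epsilon; in an epsilon-trajectory such a drop must land at 0,
   after which X stays 0 and cannot be decremented again.

   Conversely, a non-terminating run of T_D(Q) is realised by natural-number values, which form
   a 1-trajectory: X is 0 where the run says X = 0, and otherwise one more than the number of
   decrements of X still to come before its next increment, shifted up by the number of
   increments so far. Non-termination is exactly what keeps the number of pending decrements
   finite. *)

lemma recurrent_iff_frequently: "recurrent bs b \<longleftrightarrow> (\<exists>\<^sub>F i in sequentially. bs i = b)"
  by (simp add: recurrent_def frequently_cofinite cofinite_eq_sequentially[symmetric])

lemma ex_recurrent_iff_frequently:
  fixes bs :: "nat \<Rightarrow> ('f::finite, 'v::finite) bstate"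
  shows "(\<exists>b. recurrent bs b \<and> P b) \<longleftrightarrow> (\<exists>\<^sub>F i in sequentially. P (bs i))"
proof
  assume "\<exists>b. recurrent bs b \<and> P b"
  then show "\<exists>\<^sub>F i in sequentially. P (bs i)"
    by (auto simp: recurrent_iff_frequently elim: frequently_elim1)
next
  assume "\<exists>\<^sub>F i in sequentially. P (bs i)"
  then have "infinite {i. P (bs i)}"
    by (simp add: frequently_cofinite cofinite_eq_sequentially[symmetric])
  moreover have "finite (bs ` {i. P (bs i)})"
    by simp
  ultimately obtain k where k: "k \<in> {i. P (bs i)}"
    and inf: "infinite {i \<in> {i. P (bs i)}. bs i = bs k}"
    using pigeonhole_infinite by blast
  from inf have "recurrent bs (bs k)"
    unfolding recurrent_def by (rule infinite_super[rotated]) blast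
  with k show "\<exists>b. recurrent bs b \<and> P b" by blast
qed

lemma all_recurrent_iff_eventually:
  fixes bs :: "nat \<Rightarrow> ('f::finite, 'v::finite) bstate"
  shows "(\<forall>b. recurrent bs b \<longrightarrow> P b) \<longleftrightarrow> (\<forall>\<^sub>F i in sequentially. P (bs i))"
  using ex_recurrent_iff_frequently[of bs "\<lambda>b. \<not> P b"] unfolding not_eventually[symmetric] by blast

lemma terminating_D_iff:
  fixes bs :: "nat \<Rightarrow> ('f::finite, 'v::finite) bstate"
  shows "terminating_D \<pi> bs \<longleftrightarrow> (\<exists>X.
    (\<exists>\<^sub>F i in sequentially. \<exists>a. bpolicy \<pi> (bs i) = Some a \<and> neff a X = Some Dec) \<and>
    (\<forall>\<^sub>F i in sequentially. \<nexists>a. bpolicy \<pi> (bs i) = Some a \<and> neff a X = Some Inc))"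
  unfolding terminating_D_def by (simp only: ex_recurrent_iff_frequently all_recurrent_iff_eventually)

lemma ex_valid_state: "\<exists>s. valid_state s \<and> bool_state s = b"
  by (rule exI[of _ "(fst b, \<lambda>X. if snd b X then 0 else 1)"])
     (auto simp: valid_state_def bool_state_def)

lemma bpolicy_bool_state:
  assumes "is_policy Q \<pi>" and "valid_state s"
  shows "bpolicy \<pi> (bool_state s) = \<pi> s"
proof -
  let ?t = "SOME t. valid_state t \<and> bool_state t = bool_state s"
  have "valid_state ?t \<and> bool_state ?t = bool_state s"
    using someI_ex[OF ex_valid_state] .
  then show ?thesis
    using assms unfolding is_policy_def bpolicy_def by blast
qed

lemma bpolicy_in_ops:
  assumes "is_policy Q \<pi>" and "bpolicy \<pi> b = Some a"
  shows "a \<in> ops Q"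
  using assms someI_ex[OF ex_valid_state] unfolding is_policy_def bpolicy_def by blast

lemma traj_Q_valid_state:
  assumes "traj_Q Q \<pi> s"
  shows "valid_state (s i)"
proof (cases i)
  case 0
  then show ?thesis using assms by (simp add: traj_Q_def initial_state_def)
next
  case (Suc j)
  then show ?thesis using assms by (auto simp: traj_Q_def succ_Q_def)
qed

lemma succ_D_bool_state:
  assumes "valid_state s" and "succ_Q a s s'"
  shows "succ_D a (bool_state s) (bool_state s')"
proof -
  have "snd s' X \<noteq> 0" if "neff a X = Some Inc" for X
    using assms that unfolding valid_state_def succ_Q_def by (metis less_le_not_le)
  with assms(2) show ?thesis
    by (simp add: succ_D_def succ_Q_def bool_state_def)
qed

lemma traj_D_bool_states:
  assumes "is_policy Q \<pi>" and "traj_Q Q \<pi> s"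
  shows "traj_D Q \<pi> (\<lambda>i. bool_state (s i))"
  unfolding traj_D_def
proof (intro conjI allI)
  show "bool_state (s 0) = init_bstate Q"
    using assms(2) by (simp add: traj_Q_def initial_state_def)
next
  fix i
  obtain a where "\<pi> (s i) = Some a" "applicable a (s i)" "succ_Q a (s i) (s (Suc i))"
    using assms(2) unfolding traj_Q_def by blast
  moreover have "valid_state (s i)"
    using assms(2) by (rule traj_Q_valid_state)
  ultimately have "bpolicy \<pi> (bool_state (s i)) = Some a" "holds_lits (bool_state (s i)) (pre a)"
    "succ_D a (bool_state (s i)) (bool_state (s (Suc i)))"
    using bpolicy_bool_state[OF assms(1)] succ_D_bool_state by (simp_all add: applicable_def)
  then show "\<exists>a. bpolicy \<pi> (bool_state (s i)) = Some a \<and> holds_lits (bool_state (s i)) (pre a)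
      \<and> succ_D a (bool_state (s i)) (bool_state (s (Suc i)))"
    by blast
qed

lemma eventually_stationary_if_large_drops:
  fixes x :: "nat \<Rightarrow> real"
  assumes "0 < \<epsilon>" and nonneg: "\<And>i. 0 \<le> x i"
    and noninc: "\<forall>\<^sub>F i in sequentially. x (Suc i) \<le> x i"
    and drops: "\<And>i. x (Suc i) < x i \<Longrightarrow> x (Suc i) \<le> x i - \<epsilon> \<or> x (Suc i) = 0"
  shows "\<forall>\<^sub>F i in sequentially. x (Suc i) = x i"
proof -
  obtain N where N: "\<And>i. N \<le> i \<Longrightarrow> x (Suc i) \<le> x i"
    using noninc by (auto simp: eventually_sequentially)
  have dec: "decseq (\<lambda>i. x (i + N))"
    by (rule decseq_SucI) (simp add: N)
  then obtain L where "(\<lambda>i. x (i + N)) \<longlonglongrightarrow> L"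
    using nonneg decseq_convergent by blast
  then have "(\<lambda>i. x (Suc i + N) - x (i + N)) \<longlonglongrightarrow> L - L"
    by (intro tendsto_diff LIMSEQ_Suc)
  then have "\<forall>\<^sub>F i in sequentially. x (Suc (i + N)) - x (i + N) > - \<epsilon>"
    using \<open>0 < \<epsilon>\<close> order_tendstoD(1)[of _ 0 sequentially "- \<epsilon>"] by simp
  then have "\<forall>\<^sub>F i in sequentially. x (Suc (i + N)) > x (i + N) - \<epsilon>"
    by (auto elim: eventually_mono)
  then have "\<forall>\<^sub>F i in sequentially. x (Suc i) > x i - \<epsilon>"
    using eventually_sequentially_seg[of "\<lambda>i. x (Suc i) > x i - \<epsilon>" N] by simp
  then obtain M where M: "\<And>i. M \<le> i \<Longrightarrow> x (Suc i) < x i \<Longrightarrow> x (Suc i) = 0"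
    using drops unfolding eventually_sequentially by force
  show ?thesis
  proof (cases "\<exists>j\<ge>max M N. x j = 0")
    case True
    then obtain j where "j \<ge> N" "x j = 0"
      by auto
    then have "x i = 0" if "j \<le> i" for i
      using dec[THEN decseqD, of "j - N" "i - N"] nonneg[of i] that by simp
    then show ?thesis
      unfolding eventually_sequentially by (metis le_SucI)
  next
    case False
    then have "x (Suc i) = x i" if "max M N \<le> i" for i
      using M[of i] N[of i] that by fastforce
    then show ?thesis
      unfolding eventually_sequentially by blast
  qed
qed

lemma not_terminating_D_bool_states:
  fixes s :: "nat \<Rightarrow> ('f::finite, 'v::finite) state"
  assumes pol: "is_policy Q \<pi>" and traj: "traj_Q Q \<pi> s"
    and "0 < \<epsilon>" and eps: "eps_traj \<epsilon> s"
  shows "\<not> terminating_D \<pi> (\<lambda>i. bool_state (s i))"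
proof
  assume "terminating_D \<pi> (\<lambda>i. bool_state (s i))"
  then obtain X where
    dec: "\<exists>\<^sub>F i in sequentially. \<exists>a. bpolicy \<pi> (bool_state (s i)) = Some a \<and> neff a X = Some Dec" and
    no_inc: "\<forall>\<^sub>F i in sequentially. \<nexists>a. bpolicy \<pi> (bool_state (s i)) = Some a \<and> neff a X = Some Inc"
    unfolding terminating_D_iff by blast
  obtain A where A: "\<And>i. \<pi> (s i) = Some (A i)" "\<And>i. succ_Q (A i) (s i) (s (Suc i))"
    using traj unfolding traj_Q_def by metis
  have bpolicy_A: "bpolicy \<pi> (bool_state (s i)) = Some (A i)" for i
    using bpolicy_bool_state[OF pol traj_Q_valid_state[OF traj]] A(1) by simp
  define x where "x i = snd (s i) X" for i
  have "\<forall>\<^sub>F i in sequentially. x (Suc i) = x i"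
  proof (rule eventually_stationary_if_large_drops[OF \<open>0 < \<epsilon>\<close>])
    show "0 \<le> x i" for i
      using traj_Q_valid_state[OF traj] by (simp add: x_def valid_state_def)
    show "\<forall>\<^sub>F i in sequentially. x (Suc i) \<le> x i"
      using no_inc
    proof (rule eventually_mono)
      fix i
      assume "\<nexists>a. bpolicy \<pi> (bool_state (s i)) = Some a \<and> neff a X = Some Inc"
      then have "neff (A i) X \<noteq> Some Inc"
        using bpolicy_A by blast
      then show "x (Suc i) \<le> x i"
        using A(2)[of i] unfolding x_def succ_Q_def
        by (cases "neff (A i) X" rule: option.exhaust; cases "the (neff (A i) X)") auto
    qed
    show "x (Suc i) \<le> x i - \<epsilon> \<or> x (Suc i) = 0" if "x (Suc i) < x i" for i
    proof -
      have "\<epsilon> \<le> \<bar>x (Suc i) - x i\<bar> \<or> x (Suc i) = 0"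
        using eps that unfolding eps_traj_def x_def by force
      then show ?thesis
        using that by linarith
    qed
  qed
  moreover have "\<exists>\<^sub>F i in sequentially. x (Suc i) < x i"
    using dec
  proof (rule frequently_elim1)
    fix i
    assume "\<exists>a. bpolicy \<pi> (bool_state (s i)) = Some a \<and> neff a X = Some Dec"
    then show "x (Suc i) < x i"
      using A(2)[of i] bpolicy_A[of i] by (auto simp: x_def succ_Q_def)
  qed
  ultimately have "\<exists>\<^sub>F i in sequentially. x (Suc i) < x i \<and> x (Suc i) = x i"
    using frequently_eventually_frequently by blast
  then have "\<exists>\<^sub>F i in sequentially. False"
    by (rule frequently_elim1) auto
  then show False
    by simp
qed

definition pending_decs :: "(nat \<Rightarrow> neffect option) \<Rightarrow> nat \<Rightarrow> nat set" where
  "pending_decs e i = {k. i \<le> k \<and> e k = Some Dec \<and> (\<forall>j\<in>{i..k}. e j \<noteq> Some Inc)}"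

lemma pending_decs_Inc: "e i = Some Inc \<Longrightarrow> pending_decs e i = {}"
  by (auto simp: pending_decs_def)

lemma pending_decs_Suc:
  assumes "e i \<noteq> Some Inc"
  shows "pending_decs e i =
    (if e i = Some Dec then insert i (pending_decs e (Suc i)) else pending_decs e (Suc i))"
proof -
  have "{i..k} = insert i {Suc i..k}" if "i \<le> k" for k
    using that by auto
  with assms show ?thesis
    unfolding pending_decs_def by (auto simp: le_Suc_eq Suc_le_eq le_less)
qed

lemma finite_pending_decs:
  assumes "(\<exists>\<^sub>F k in sequentially. e k = Some Dec) \<Longrightarrow> (\<exists>\<^sub>F k in sequentially. e k = Some Inc)"
  shows "finite (pending_decs e i)"
proof (cases "\<exists>\<^sub>F k in sequentially. e k = Some Dec")
  case True
  then obtain j where "i \<le> j" "e j = Some Inc"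
    using assms by (auto simp: frequently_sequentially)
  then have "pending_decs e i \<subseteq> {..<j}"
    by (auto simp: pending_decs_def not_less)
  then show ?thesis
    using finite_subset by blast
next
  case False
  then obtain N where "\<And>k. N \<le> k \<Longrightarrow> e k \<noteq> Some Dec"
    by (auto simp: not_frequently eventually_sequentially)
  then have "pending_decs e i \<subseteq> {..<N}"
    unfolding pending_decs_def by (auto intro: ccontr)
  then show ?thesis
    using finite_subset by blast
qed

definition counter :: "(nat \<Rightarrow> bool) \<Rightarrow> (nat \<Rightarrow> neffect option) \<Rightarrow> nat \<Rightarrow> nat" where
  "counter zero e i =
     (if zero i then 0 else Suc (card (pending_decs e i)) + (\<Sum>j<i. if e j = Some Inc then 1 else 0))"

lemma counter_eq_0_iff: "counter zero e i = 0 \<longleftrightarrow> zero i"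
  by (simp add: counter_def)

lemma counter_Inc:
  assumes "e i = Some Inc" and "\<not> zero (Suc i)"
  shows "counter zero e i < counter zero e (Suc i)"
  using assms by (simp add: counter_def pending_decs_Inc)

lemma counter_Dec:
  assumes "e i = Some Dec" and "\<not> zero i" and "finite (pending_decs e (Suc i))"
  shows "counter zero e (Suc i) < counter zero e i"
proof -
  have "i \<notin> pending_decs e (Suc i)"
    by (simp add: pending_decs_def)
  then show ?thesis
    using assms by (simp add: counter_def pending_decs_Suc)
qed

lemma counter_None:
  assumes "e i = None" and "zero (Suc i) = zero i"
  shows "counter zero e (Suc i) = counter zero e i"
  using assms by (simp add: counter_def pending_decs_Suc)

(* Along a trajectory of T_D(Q) the policy is defined at every state, so "the" is harmless. *)
definition counter_lift ::
    "(('f, 'v) state \<Rightarrow> ('f, 'v) action option) \<Rightarrow> (nat \<Rightarrow> ('f, 'v) bstate) \<Rightarrow> nat \<Rightarrow> ('f, 'v) state" where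
  "counter_lift \<pi> bs i =
     (fst (bs i), \<lambda>X. real (counter (\<lambda>j. snd (bs j) X) (\<lambda>j. neff (the (bpolicy \<pi> (bs j))) X) i))"

lemma valid_state_counter_lift: "valid_state (counter_lift \<pi> bs i)"
  by (simp add: valid_state_def counter_lift_def)

lemma bool_state_counter_lift: "bool_state (counter_lift \<pi> bs i) = bs i"
  by (simp add: bool_state_def counter_lift_def counter_eq_0_iff)

lemma eps_traj_counter_lift: "eps_traj 1 (counter_lift \<pi> bs)"
proof -
  have "1 \<le> \<bar>real m - real n\<bar>" if "m \<noteq> n" for m n :: nat
    using that by linarith
  then show ?thesis
    by (simp add: eps_traj_def counter_lift_def)
qed

lemma traj_Q_counter_lift:
  fixes bs :: "nat \<Rightarrow> ('f::finite, 'v::finite) bstate"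
  assumes wf: "wf_qnp Q" and pol: "is_policy Q \<pi>"
    and traj: "traj_D Q \<pi> bs" and nonterm: "\<not> terminating_D \<pi> bs"
  shows "traj_Q Q \<pi> (counter_lift \<pi> bs)"
proof -
  let ?s = "counter_lift \<pi> bs"
  obtain A where A: "\<And>i. bpolicy \<pi> (bs i) = Some (A i)" "\<And>i. holds_lits (bs i) (pre (A i))"
    "\<And>i. succ_D (A i) (bs i) (bs (Suc i))"
    using traj unfolding traj_D_def by metis
  have s: "snd (?s i) X = real (counter (\<lambda>j. snd (bs j) X) (\<lambda>j. neff (A j) X) i)" for i X
    by (simp add: counter_lift_def A(1))
  have fin: "finite (pending_decs (\<lambda>j. neff (A j) X) i)" for X i
  proof (rule finite_pending_decs)
    assume "\<exists>\<^sub>F k in sequentially. neff (A k) X = Some Dec"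
    then show "\<exists>\<^sub>F k in sequentially. neff (A k) X = Some Inc"
      using nonterm by (auto simp: terminating_D_iff A(1) not_eventually)
  qed
  have step: "succ_Q (A i) (?s i) (?s (Suc i))" for i
    unfolding succ_Q_def
  proof (intro conjI allI impI)
    show "valid_state (?s (Suc i))"
      by (rule valid_state_counter_lift)
    show "fst (?s (Suc i)) = apply_eff (eff (A i)) (fst (?s i))"
      using A(3)[of i] by (simp add: counter_lift_def succ_D_def)
    fix X
    show "snd (?s i) X < snd (?s (Suc i)) X" if "neff (A i) X = Some Inc"
      using A(3)[of i] that unfolding s succ_D_def by (simp add: counter_Inc)
    show "snd (?s (Suc i)) X < snd (?s i) X" if "neff (A i) X = Some Dec"
    proof -
      have "GtZeroL X \<in> pre (A i)"
        using wf bpolicy_in_ops[OF pol A(1)] that by (simp add: wf_qnp_def)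
      then have "\<not> snd (bs i) X"
        using A(2)[of i] by (auto simp: holds_lits_def)
      then show ?thesis
        using that fin unfolding s by (simp add: counter_Dec)
    qed
    show "snd (?s (Suc i)) X = snd (?s i) X" if "neff (A i) X = None"
      using A(3)[of i] that unfolding s succ_D_def by (simp add: counter_None)
  qed
  show ?thesis
    unfolding traj_Q_def
  proof (intro conjI allI exI)
    show "initial_state Q (?s 0)"
      using traj by (simp add: initial_state_def traj_D_def valid_state_counter_lift bool_state_counter_lift)
    fix i
    show "\<pi> (?s i) = Some (A i)"
      using bpolicy_bool_state[OF pol valid_state_counter_lift] A(1) by (simp add: bool_state_counter_lift)
    show "applicable (A i) (?s i)"
      using A(2) by (simp add: applicable_def bool_state_counter_lift)
    show "succ_Q (A i) (?s i) (?s (Suc i))"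
      by (rule step)
  qed
qed

theorem theorem3:
  fixes Q :: "('f::finite, 'v::finite) qnp"
    and \<pi> :: "('f, 'v) state \<Rightarrow> ('f, 'v) action option"
    and bs :: "nat \<Rightarrow> ('f, 'v) bstate"
  assumes "wf_qnp Q"
    and "is_policy Q \<pi>"
  shows "(traj_D Q \<pi> bs \<and> \<not> terminating_D \<pi> bs) \<longleftrightarrow>
         (\<exists>\<epsilon>>0. \<exists>s. traj_Q Q \<pi> s \<and> eps_traj \<epsilon> s \<and> (\<forall>i. bool_state (s i) = bs i))"
proof
  assume "traj_D Q \<pi> bs \<and> \<not> terminating_D \<pi> bs"
  then have "traj_Q Q \<pi> (counter_lift \<pi> bs)"
    using traj_Q_counter_lift[OF assms] by blast
  then show "\<exists>\<epsilon>>0. \<exists>s. traj_Q Q \<pi> s \<and> eps_traj \<epsilon> s \<and> (\<forall>i. bool_state (s i) = bs i)"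
    using eps_traj_counter_lift bool_state_counter_lift by (metis zero_less_one)
next
  assume "\<exists>\<epsilon>>0. \<exists>s. traj_Q Q \<pi> s \<and> eps_traj \<epsilon> s \<and> (\<forall>i. bool_state (s i) = bs i)"
  then obtain \<epsilon> s where "0 < \<epsilon>" "traj_Q Q \<pi> s" "eps_traj \<epsilon> s" and "bs = (\<lambda>i. bool_state (s i))"
    by auto
  then show "traj_D Q \<pi> bs \<and> \<not> terminating_D \<pi> bs"
    using traj_D_bool_states[OF assms(2)] not_terminating_D_bool_states[OF assms(2)] by blast
qed

end
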